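(* Let $n\ge 2$. Then $\Gamma^0=\mathrm{C}^\times$, and $$\Gamma^n=\begin{cases}\mathrm{C}^\times, & n \text{ odd},\\ \mathrm{C}^{\times(0)}\cup\mathrm{C}^{\times(1)}, & n\text{ even}.\end{cases}$$
   Context: Let $\mathrm{C}$ be either the real Clifford algebra $C\ell_{p,q}$ with $p+q=n$, or the complex Clifford algebra $C\ell(\mathbb{C}^n)$. It has identity $e$ and generators $e_1,\dots,e_n$ satisfying $e_ae_b+e_be_a=2\eta_{ab}e$. In the real case $\eta=\mathrm{diag}(1,\dots,1,-1,\dots,-1)$ with $p$ entries $+1$ and $q$ entries $-1$. In the complex case $\eta=I_n$. For $a_1<\dots<a_k$ write $e_{a_1\dots a_k}=e_{a_1}\cdots e_{a_k}$. $\mathrm{C}^k$ (grade $k$, $0\le k\le n$) is the span of the $e_{a_1\dots a_k}$ with $k$ indices; $\mathrm{C}^0=\mathrm{span}(e)$. The even subspace is $\mathrm{C}^{(0)}=\bigoplus_{k\text{ even}}\mathrm{C}^k$ and the odd subspace is $\mathrm{C}^{(1)}=\bigoplus_{k\text{ odd}}\mathrm{C}^k$. For any subset $S\subseteq\mathrm{C}$, $S^\times$ denotes the set of elements of $S$ invertible in $\mathrm{C}$; in particular $\mathrm{C}^{\times(j)}:=(\mathrm{C}^{(j)})^\times$. For $k=0,\dots,n$ define $\Gamma^k=\{T\in\mathrm{C}^\times: T\,\mathrm{C}^k\,T^{-1}\subseteq\mathrm{C}^k\}$. *)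

theory Defs
  imports Complex_Main
begin

text \<open>Clifford algebra on generators e_0,...,e_{n-1} with metric signs eta i.
  An element is represented by its coefficient function on index sets
  (blades): x A is the coefficient of e_A, and x A = 0 unless A is a subset of {..<n}.\<close>

definition cl_carrier :: "nat \<Rightarrow> (nat set \<Rightarrow> 'a::field) set" where
  "cl_carrier n = {x. \<forall>A. \<not> A \<subseteq> {..<n} \<longrightarrow> x A = 0}"

text \<open>e_A e_B = (-1)^{#{(a,b) in A x B. b < a}} (prod_{i in A cap B} eta i) e_{A symdiff B}\<close>
definition blade_coeff :: "(nat \<Rightarrow> 'a::field) \<Rightarrow> nat set \<Rightarrow> nat set \<Rightarrow> 'a" where
  "blade_coeff eta A B =
     (-1) ^ card {(a,b). a \<in> A \<and> b \<in> B \<and> b < a} * (\<Prod>i\<in>A \<inter> B. eta i)"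

definition cl_mult :: "(nat \<Rightarrow> 'a::field) \<Rightarrow> nat \<Rightarrow> (nat set \<Rightarrow> 'a) \<Rightarrow> (nat set \<Rightarrow> 'a) \<Rightarrow> (nat set \<Rightarrow> 'a)" where
  "cl_mult eta n x y = (\<lambda>C. \<Sum>A\<in>Pow {..<n}. \<Sum>B\<in>Pow {..<n}.
      if (A - B) \<union> (B - A) = C then x A * y B * blade_coeff eta A B else 0)"

definition cl_one :: "nat set \<Rightarrow> 'a::field" where
  "cl_one = (\<lambda>A. if A = {} then 1 else 0)"

definition cl_is_inverse :: "(nat \<Rightarrow> 'a::field) \<Rightarrow> nat \<Rightarrow> (nat set \<Rightarrow> 'a) \<Rightarrow> (nat set \<Rightarrow> 'a) \<Rightarrow> bool" where
  "cl_is_inverse eta n x y \<longleftrightarrow> y \<in> cl_carrier n \<and> cl_mult eta n x y = cl_one \<and> cl_mult eta n y x = cl_one"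

definition cl_units :: "(nat \<Rightarrow> 'a::field) \<Rightarrow> nat \<Rightarrow> (nat set \<Rightarrow> 'a) set \<Rightarrow> (nat set \<Rightarrow> 'a) set" where
  "cl_units eta n S = {x \<in> S. \<exists>y. cl_is_inverse eta n x y}"

definition cl_grade :: "nat \<Rightarrow> nat \<Rightarrow> (nat set \<Rightarrow> 'a::field) set" where
  "cl_grade n k = {x \<in> cl_carrier n. \<forall>A. card A \<noteq> k \<longrightarrow> x A = 0}"

definition cl_even :: "nat \<Rightarrow> (nat set \<Rightarrow> 'a::field) set" where
  "cl_even n = {x \<in> cl_carrier n. \<forall>A. odd (card A) \<longrightarrow> x A = 0}"

definition cl_odd :: "nat \<Rightarrow> (nat set \<Rightarrow> 'a::field) set" where
  "cl_odd n = {x \<in> cl_carrier n. \<forall>A. even (card A) \<longrightarrow> x A = 0}"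

definition cl_Gamma :: "(nat \<Rightarrow> 'a::field) \<Rightarrow> nat \<Rightarrow> nat \<Rightarrow> (nat set \<Rightarrow> 'a) set" where
  "cl_Gamma eta n k = {T \<in> cl_units eta n (cl_carrier n).
     \<forall>S. cl_is_inverse eta n T S \<longrightarrow>
        (\<forall>X \<in> cl_grade n k. cl_mult eta n (cl_mult eta n T X) S \<in> cl_grade n k)}"

text \<open>real signature (p,q): first p generators square to +1, the remaining q to -1\<close>
definition eta_real :: "nat \<Rightarrow> nat \<Rightarrow> real" where
  "eta_real p i = (if i < p then 1 else -1)"

definition eta_complex :: "nat \<Rightarrow> complex" where
  "eta_complex i = 1"

end

theory Submission
  imports Defs
begin

text \<open>Scalars are central, so conjugation fixes the grade-0 part pointwise. The top grade is spanned
  by the pseudoscalar e_U, U = {0, ..., n-1}, and moving a blade e_B across it costs the sign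
  (-1)^(|B|(n-1)); hence T e_U = e_U T' where T' rescales the B-coefficient of T by that sign.
  For odd n every T commutes with e_U. For even n, T' is the grade involution of T, and
  T e_U T^-1 = d e_U gives e_U T' = e_U (d T); left multiplication by e_U is injective, so
  T' = d T, i.e. all blades in the support of T have the parity determined by d = \<plusminus>1.\<close>

definition inversions :: "nat set \<Rightarrow> nat set \<Rightarrow> nat" where
  "inversions A B = card {(a, b). a \<in> A \<and> b \<in> B \<and> b < a}"

lemma blade_coeff_eq_inversions:
  "blade_coeff eta A B = (-1) ^ inversions A B * (\<Prod>i\<in>A \<inter> B. eta i)"
  by (simp add: blade_coeff_def inversions_def)

lemma finite_inversion_pairs:
  "finite A \<Longrightarrow> finite B \<Longrightarrow> finite {(a, b). a \<in> A \<and> b \<in> B \<and> P a b}"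
  by (rule finite_subset[of _ "A \<times> B"]) auto

lemma inversions_Un_left:
  assumes "finite A" "finite B" "finite C" "A \<inter> B = {}"
  shows "inversions (A \<union> B) C = inversions A C + inversions B C"
proof -
  have "{(a, b). a \<in> A \<union> B \<and> b \<in> C \<and> b < a} =
        {(a, b). a \<in> A \<and> b \<in> C \<and> b < a} \<union> {(a, b). a \<in> B \<and> b \<in> C \<and> b < a}"
    by auto
  then show ?thesis
    unfolding inversions_def
    by (simp only:) (rule card_Un_disjoint, use assms in \<open>auto intro: finite_inversion_pairs\<close>)
qed

lemma inversions_Un_right:
  assumes "finite A" "finite B" "finite C" "A \<inter> B = {}"
  shows "inversions C (A \<union> B) = inversions C A + inversions C B"
proof -
  have "{(a, b). a \<in> C \<and> b \<in> A \<union> B \<and> b < a} =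
        {(a, b). a \<in> C \<and> b \<in> A \<and> b < a} \<union> {(a, b). a \<in> C \<and> b \<in> B \<and> b < a}"
    by auto
  then show ?thesis
    unfolding inversions_def
    by (simp only:) (rule card_Un_disjoint, use assms in \<open>auto intro: finite_inversion_pairs\<close>)
qed

lemma inversions_sym_diff_left:
  assumes "finite A" "finite B" "finite C"
  shows "inversions (sym_diff A B) C + 2 * inversions (A \<inter> B) C = inversions A C + inversions B C"
proof -
  have parts: "(A - B) \<union> (A \<inter> B) = A" "(B - A) \<union> (A \<inter> B) = B" by auto
  have "inversions A C = inversions (A - B) C + inversions (A \<inter> B) C"
       "inversions B C = inversions (B - A) C + inversions (A \<inter> B) C"
       "inversions (sym_diff A B) C = inversions (A - B) C + inversions (B - A) C"
    using assms inversions_Un_left[of "A - B" "A \<inter> B" C] inversions_Un_left[of "B - A" "A \<inter> B" C]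
      inversions_Un_left[of "A - B" "B - A" C]
    by (simp_all only: parts) auto
  then show ?thesis by simp
qed

lemma inversions_sym_diff_right:
  assumes "finite A" "finite B" "finite C"
  shows "inversions C (sym_diff A B) + 2 * inversions C (A \<inter> B) = inversions C A + inversions C B"
proof -
  have parts: "(A - B) \<union> (A \<inter> B) = A" "(B - A) \<union> (A \<inter> B) = B" by auto
  have "inversions C A = inversions C (A - B) + inversions C (A \<inter> B)"
       "inversions C B = inversions C (B - A) + inversions C (A \<inter> B)"
       "inversions C (sym_diff A B) = inversions C (A - B) + inversions C (B - A)"
    using assms inversions_Un_right[of "A - B" "A \<inter> B" C] inversions_Un_right[of "B - A" "A \<inter> B" C]
      inversions_Un_right[of "A - B" "B - A" C]
    by (simp_all only: parts) auto
  then show ?thesis by simp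
qed

lemma neg_one_power_add_double: "(-1 :: 'a::ring_1) ^ (m + 2 * k) = (-1) ^ m"
  by (simp add: power_add power_mult)

lemma blade_coeff_cocycle:
  assumes "finite A" "finite B" "finite E"
  shows "blade_coeff eta A B * blade_coeff eta (sym_diff A B) E =
         blade_coeff eta A (sym_diff B E) * blade_coeff eta B E"
proof -
  have "inversions A B + inversions (sym_diff A B) E + 2 * inversions (A \<inter> B) E =
        inversions A (sym_diff B E) + inversions B E + 2 * inversions A (B \<inter> E)"
    using inversions_sym_diff_left[OF assms] inversions_sym_diff_right[OF assms(2,3,1)] by simp
  then have sign: "(-1 :: 'a) ^ (inversions A B + inversions (sym_diff A B) E) =
                   (-1) ^ (inversions A (sym_diff B E) + inversions B E)"
    by (metis neg_one_power_add_double)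
  \<comment> \<open>both metric factors are the product over the elements lying in at least two of A, B, E\<close>
  define M where "M = (A \<inter> B) \<union> (A \<inter> E) \<union> (B \<inter> E)"
  have "M = (A \<inter> B) \<union> (sym_diff A B \<inter> E)" "(A \<inter> B) \<inter> (sym_diff A B \<inter> E) = {}"
       "M = (A \<inter> sym_diff B E) \<union> (B \<inter> E)" "(A \<inter> sym_diff B E) \<inter> (B \<inter> E) = {}"
    by (auto simp: M_def)
  then have "(\<Prod>i\<in>A \<inter> B. eta i) * (\<Prod>i\<in>sym_diff A B \<inter> E. eta i) =
             (\<Prod>i\<in>A \<inter> sym_diff B E. eta i) * (\<Prod>i\<in>B \<inter> E. eta i)"
    using assms by (metis finite_Int prod.union_disjoint)
  with sign show ?thesis
    by (simp add: blade_coeff_eq_inversions power_add mult_ac)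
qed

lemma sym_diff_cancel_left [simp]: "sym_diff A (sym_diff A B) = B"
  by auto

lemma sym_diff_cancel_right [simp]: "sym_diff (sym_diff A B) B = A"
  by auto

lemma cl_mult_apply:
  assumes "C \<subseteq> {..<n}"
  shows "cl_mult eta n x y C = (\<Sum>A\<in>Pow {..<n}. x A * y (sym_diff A C) * blade_coeff eta A (sym_diff A C))"
  unfolding cl_mult_def
proof (rule sum.cong[OF refl])
  fix A assume "A \<in> Pow {..<n}"
  then have "sym_diff A C \<in> Pow {..<n}" using assms by auto
  moreover have "sym_diff A B = C \<longleftrightarrow> B = sym_diff A C" for B by auto
  ultimately show "(\<Sum>B\<in>Pow {..<n}. if sym_diff A B = C then x A * y B * blade_coeff eta A B else 0) =
        x A * y (sym_diff A C) * blade_coeff eta A (sym_diff A C)"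
    by simp
qed

lemma cl_mult_outside: "\<not> C \<subseteq> {..<n} \<Longrightarrow> cl_mult eta n x y C = 0"
  unfolding cl_mult_def by (rule sum.neutral) (auto intro!: sum.neutral)

lemma cl_mult_in_carrier: "cl_mult eta n x y \<in> cl_carrier n"
  by (simp add: cl_carrier_def cl_mult_outside)

lemma cl_mult_assoc: "cl_mult eta n x (cl_mult eta n y z) = cl_mult eta n (cl_mult eta n x y) z"
proof
  fix C
  let ?U = "{..<n}" and ?b = "blade_coeff eta"
  show "cl_mult eta n x (cl_mult eta n y z) C = cl_mult eta n (cl_mult eta n x y) z C"
  proof (cases "C \<subseteq> ?U")
    case False
    then show ?thesis by (simp add: cl_mult_outside)
  next
    case C: True
    have fin: "finite A" if "A \<in> Pow ?U" for A
      using that by (auto intro: finite_subset)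
    have "cl_mult eta n x (cl_mult eta n y z) C = (\<Sum>A\<in>Pow ?U. \<Sum>B\<in>Pow ?U.
          x A * y B * z (sym_diff B (sym_diff A C)) * (?b B (sym_diff B (sym_diff A C)) * ?b A (sym_diff A C)))"
    proof (subst cl_mult_apply[OF C], rule sum.cong[OF refl])
      fix A assume "A \<in> Pow ?U"
      then have "sym_diff A C \<subseteq> ?U" using C by auto
      then show "x A * cl_mult eta n y z (sym_diff A C) * ?b A (sym_diff A C) = (\<Sum>B\<in>Pow ?U.
          x A * y B * z (sym_diff B (sym_diff A C)) * (?b B (sym_diff B (sym_diff A C)) * ?b A (sym_diff A C)))"
        by (simp add: cl_mult_apply sum_distrib_left sum_distrib_right mult_ac)
    qed
    also have "\<dots> = (\<Sum>A\<in>Pow ?U. \<Sum>B\<in>Pow ?U.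
          x A * y B * z (sym_diff (sym_diff A B) C) * (?b A B * ?b (sym_diff A B) (sym_diff (sym_diff A B) C)))"
    proof (intro sum.cong refl)
      fix A B assume "A \<in> Pow ?U" "B \<in> Pow ?U"
      moreover have "sym_diff B (sym_diff A C) = sym_diff (sym_diff A B) C"
                    "sym_diff A C = sym_diff B (sym_diff (sym_diff A B) C)" by auto
      ultimately show "x A * y B * z (sym_diff B (sym_diff A C)) * (?b B (sym_diff B (sym_diff A C)) * ?b A (sym_diff A C)) =
          x A * y B * z (sym_diff (sym_diff A B) C) * (?b A B * ?b (sym_diff A B) (sym_diff (sym_diff A B) C))"
        using blade_coeff_cocycle[of A B "sym_diff (sym_diff A B) C" eta] C fin
        by (simp add: mult.commute finite_subset)
    qed
    also have "\<dots> = (\<Sum>A\<in>Pow ?U. \<Sum>D\<in>Pow ?U.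
          x A * y (sym_diff A D) * z (sym_diff D C) * (?b A (sym_diff A D) * ?b D (sym_diff D C)))"
    proof (rule sum.cong[OF refl])
      fix A assume "A \<in> Pow ?U"
      then show "(\<Sum>B\<in>Pow ?U. x A * y B * z (sym_diff (sym_diff A B) C) *
            (?b A B * ?b (sym_diff A B) (sym_diff (sym_diff A B) C))) =
          (\<Sum>D\<in>Pow ?U. x A * y (sym_diff A D) * z (sym_diff D C) *
            (?b A (sym_diff A D) * ?b D (sym_diff D C)))"
        by (intro sum.reindex_bij_witness[of _ "sym_diff A" "sym_diff A"]) auto
    qed
    also have "\<dots> = (\<Sum>D\<in>Pow ?U. \<Sum>A\<in>Pow ?U.
          x A * y (sym_diff A D) * z (sym_diff D C) * (?b A (sym_diff A D) * ?b D (sym_diff D C)))"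
      by (rule sum.swap)
    also have "\<dots> = cl_mult eta n (cl_mult eta n x y) z C"
      using C by (auto simp: cl_mult_apply sum_distrib_left sum_distrib_right mult_ac intro!: sum.cong)
    finally show ?thesis .
  qed
qed

lemma cl_mult_scale_left: "cl_mult eta n (\<lambda>A. k * x A) y = (\<lambda>C. k * cl_mult eta n x y C)"
  unfolding cl_mult_def by (simp add: sum_distrib_left mult_ac if_distrib cong: if_cong)

lemma cl_mult_scale_right: "cl_mult eta n x (\<lambda>A. k * y A) = (\<lambda>C. k * cl_mult eta n x y C)"
  unfolding cl_mult_def by (simp add: sum_distrib_left mult_ac if_distrib cong: if_cong)

lemma cl_mult_one_right:
  assumes "x \<in> cl_carrier n"
  shows "cl_mult eta n x cl_one = x"
proof
  fix C
  show "cl_mult eta n x cl_one C = x C"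
  proof (cases "C \<subseteq> {..<n}")
    case False
    then show ?thesis using assms by (simp add: cl_mult_outside cl_carrier_def)
  next
    case True
    have "sym_diff A C = {} \<longleftrightarrow> A = C" for A :: "nat set" by auto
    then have "cl_mult eta n x cl_one C = (\<Sum>A\<in>Pow {..<n}. if A = C then x A else 0)"
      unfolding cl_mult_apply[OF True] by (intro sum.cong) (auto simp: cl_one_def blade_coeff_def)
    also have "\<dots> = x C" using True by simp
    finally show ?thesis .
  qed
qed

lemma cl_grade_zero_eq_scalar:
  assumes "X \<in> cl_grade n 0"
  shows "X = (\<lambda>A. X {} * cl_one A)"
proof
  fix A
  show "X A = X {} * cl_one A"
  proof (cases "A \<subseteq> {..<n}")
    case True
    then have "finite A" by (rule finite_subset) simp
    then show ?thesis using assms by (cases "A = {}") (auto simp: cl_grade_def cl_one_def card_gt_0_iff)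
  next
    case False
    then show ?thesis using assms by (auto simp: cl_grade_def cl_carrier_def cl_one_def)
  qed
qed

lemma cl_conj_scalar:
  assumes "T \<in> cl_carrier n" "cl_is_inverse eta n T S" "X \<in> cl_grade n 0"
  shows "cl_mult eta n (cl_mult eta n T X) S = X"
proof -
  have "cl_mult eta n (cl_mult eta n T X) S = (\<lambda>C. X {} * cl_mult eta n (cl_mult eta n T cl_one) S C)"
    by (subst cl_grade_zero_eq_scalar[OF assms(3)]) (simp add: cl_mult_scale_left cl_mult_scale_right)
  also have "\<dots> = X"
    using assms by (subst cl_grade_zero_eq_scalar[OF assms(3)])
      (simp add: cl_mult_one_right cl_is_inverse_def)
  finally show ?thesis .
qed

definition cl_pseudoscalar :: "nat \<Rightarrow> nat set \<Rightarrow> 'a::field" where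
  "cl_pseudoscalar n = (\<lambda>A. if A = {..<n} then 1 else 0)"

lemma cl_grade_top_eq_pseudoscalar:
  assumes "X \<in> cl_grade n n"
  shows "X = (\<lambda>A. X {..<n} * cl_pseudoscalar n A)"
proof
  fix A
  show "X A = X {..<n} * cl_pseudoscalar n A"
  proof (cases "A \<subseteq> {..<n}")
    case True
    then have "A \<noteq> {..<n} \<Longrightarrow> card A \<noteq> n"
      using card_subset_eq[of "{..<n}" A] by auto
    then show ?thesis using assms by (auto simp: cl_grade_def cl_pseudoscalar_def)
  next
    case False
    then show ?thesis using assms by (auto simp: cl_grade_def cl_carrier_def cl_pseudoscalar_def)
  qed
qed

lemma cl_mult_pseudoscalar_right_apply:
  assumes "C \<subseteq> {..<n}"
  shows "cl_mult eta n y (cl_pseudoscalar n) C =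
         y (sym_diff {..<n} C) * blade_coeff eta (sym_diff {..<n} C) {..<n}"
proof -
  have iff: "sym_diff A C = {..<n} \<longleftrightarrow> A = sym_diff {..<n} C" for A :: "nat set" by auto
  have "cl_mult eta n y (cl_pseudoscalar n) C =
      (\<Sum>A\<in>Pow {..<n}. if A = sym_diff {..<n} C then y A * blade_coeff eta A {..<n} else 0)"
    unfolding cl_mult_apply[OF assms] cl_pseudoscalar_def by (intro sum.cong) (auto simp: iff)
  also have "\<dots> = y (sym_diff {..<n} C) * blade_coeff eta (sym_diff {..<n} C) {..<n}"
    using assms by (subst sum.delta) auto
  finally show ?thesis .
qed

lemma cl_mult_pseudoscalar_left_apply:
  assumes "C \<subseteq> {..<n}"
  shows "cl_mult eta n (cl_pseudoscalar n) y C =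
         y (sym_diff {..<n} C) * blade_coeff eta {..<n} (sym_diff {..<n} C)"
proof -
  have "cl_mult eta n (cl_pseudoscalar n) y C = (\<Sum>A\<in>Pow {..<n}.
      if A = {..<n} then y (sym_diff {..<n} C) * blade_coeff eta {..<n} (sym_diff {..<n} C) else 0)"
    unfolding cl_mult_apply[OF assms] cl_pseudoscalar_def by (intro sum.cong) auto
  then show ?thesis by simp
qed

lemma inversions_add_swap_top:
  assumes "B \<subseteq> {..<n}"
  shows "inversions B {..<n} + inversions {..<n} B = card B * (n - 1)"
proof -
  let ?U = "{..<n}"
  have fin: "finite B" using assms by (rule finite_subset) simp
  define below where "below = {(a, b). a \<in> B \<and> b \<in> ?U \<and> b < a}"
  define above where "above = {(a, b). a \<in> B \<and> b \<in> ?U \<and> a < b}"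
  have "{(a, b). a \<in> ?U \<and> b \<in> B \<and> b < a} = prod.swap ` above"
    by (auto simp: above_def image_iff)
  then have "inversions ?U B = card above"
    unfolding inversions_def by (simp add: card_image)
  moreover have "below \<union> above = B \<times> ?U - (\<lambda>a. (a, a)) ` B" "below \<inter> above = {}"
    by (auto simp: below_def above_def)
  moreover have "finite below" "finite above"
    unfolding below_def above_def by (rule finite_inversion_pairs[OF fin], simp)+
  ultimately have "inversions B ?U + inversions ?U B = card (B \<times> ?U - (\<lambda>a. (a, a)) ` B)"
    unfolding inversions_def below_def[symmetric] by (metis card_Un_disjoint)
  also have "\<dots> = card B * n - card B"
    using fin assms by (subst card_Diff_subset) (auto simp: card_cartesian_product card_image inj_on_def)
  finally show ?thesis by (simp add: diff_mult_distrib2)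
qed

lemma blade_coeff_swap_top:
  assumes "B \<subseteq> {..<n}"
  shows "blade_coeff eta B {..<n} = (-1) ^ (card B * (n - 1)) * blade_coeff eta {..<n} B"
proof -
  have "card B * (n - 1) + inversions {..<n} B = inversions B {..<n} + 2 * inversions {..<n} B"
    using inversions_add_swap_top[OF assms] by simp
  then have "(-1 :: 'a) ^ (card B * (n - 1)) * (-1) ^ inversions {..<n} B = (-1) ^ inversions B {..<n}"
    by (metis neg_one_power_add_double power_add)
  then show ?thesis by (simp add: blade_coeff_eq_inversions Int_commute mult.assoc)
qed

lemma cl_mult_pseudoscalar_commute:
  "cl_mult eta n T (cl_pseudoscalar n) =
   cl_mult eta n (cl_pseudoscalar n) (\<lambda>B. (-1) ^ (card B * (n - 1)) * T B)"
proof
  fix C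
  show "cl_mult eta n T (cl_pseudoscalar n) C =
        cl_mult eta n (cl_pseudoscalar n) (\<lambda>B. (-1) ^ (card B * (n - 1)) * T B) C"
  proof (cases "C \<subseteq> {..<n}")
    case False
    then show ?thesis by (simp add: cl_mult_outside)
  next
    case True
    moreover have "sym_diff {..<n} C \<subseteq> {..<n}" using True by auto
    ultimately show ?thesis
      by (simp add: cl_mult_pseudoscalar_left_apply cl_mult_pseudoscalar_right_apply
          blade_coeff_swap_top mult_ac)
  qed
qed

lemma cl_mult_pseudoscalar_left_cancel:
  assumes "\<And>i. eta i \<noteq> 0"
    and "cl_mult eta n (cl_pseudoscalar n) x = cl_mult eta n (cl_pseudoscalar n) y"
    and "x \<in> cl_carrier n" "y \<in> cl_carrier n"
  shows "x = y"
proof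
  fix B
  show "x B = y B"
  proof (cases "B \<subseteq> {..<n}")
    case True
    then have "sym_diff {..<n} B \<subseteq> {..<n}" by auto
    from cl_mult_pseudoscalar_left_apply[OF this, of eta x] cl_mult_pseudoscalar_left_apply[OF this, of eta y]
    have "x B * blade_coeff eta {..<n} B = y B * blade_coeff eta {..<n} B"
      using assms(2) True by auto
    moreover have "blade_coeff eta {..<n} B \<noteq> 0"
      using assms(1) by (simp add: blade_coeff_def)
    ultimately show ?thesis by simp
  next
    case False
    then show ?thesis using assms(3,4) by (simp add: cl_carrier_def)
  qed
qed

lemma cl_conj_pseudoscalar_multiple:
  assumes "cl_is_inverse eta n T S" and "X \<in> cl_grade n n"
    and twist: "(\<lambda>B. (-1) ^ (card B * (n - 1)) * T B) = (\<lambda>B. k * T B)"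
  shows "cl_mult eta n (cl_mult eta n T X) S = (\<lambda>A. k * X A)"
proof -
  define c where "c = X {..<n}"
  have X: "X = (\<lambda>A. c * cl_pseudoscalar n A)"
    unfolding c_def by (rule cl_grade_top_eq_pseudoscalar[OF assms(2)])
  have "cl_mult eta n T X = (\<lambda>C. c * cl_mult eta n (cl_pseudoscalar n) (\<lambda>B. k * T B) C)"
    unfolding X cl_mult_scale_right cl_mult_pseudoscalar_commute twist ..
  also have "\<dots> = (\<lambda>C. k * cl_mult eta n X T C)"
    unfolding X cl_mult_scale_left cl_mult_scale_right by (simp add: mult_ac)
  finally have "cl_mult eta n (cl_mult eta n T X) S = (\<lambda>C. k * cl_mult eta n X (cl_mult eta n T S) C)"
    by (simp add: cl_mult_scale_left cl_mult_assoc)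
  also have "\<dots> = (\<lambda>A. k * X A)"
    using assms(1,2) by (simp add: cl_is_inverse_def cl_grade_def cl_mult_one_right)
  finally show ?thesis .
qed

lemma cl_Gamma_eq_units_if_conj_closed:
  assumes "\<And>T S X. T \<in> cl_carrier n \<Longrightarrow> cl_is_inverse eta n T S \<Longrightarrow> X \<in> cl_grade n k \<Longrightarrow>
             cl_mult eta n (cl_mult eta n T X) S \<in> cl_grade n k"
  shows "cl_Gamma eta n k = cl_units eta n (cl_carrier n)"
  using assms by (auto simp: cl_Gamma_def cl_units_def)

lemma cl_Gamma_zero: "cl_Gamma eta n 0 = cl_units eta n (cl_carrier n)"
  by (rule cl_Gamma_eq_units_if_conj_closed) (simp add: cl_conj_scalar)

lemma cl_scale_in_grade: "X \<in> cl_grade n k \<Longrightarrow> (\<lambda>A. c * X A) \<in> cl_grade n k"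
  by (simp add: cl_grade_def cl_carrier_def)

lemma cl_Gamma_top_odd:
  assumes "odd n"
  shows "cl_Gamma eta n n = cl_units eta n (cl_carrier n)"
proof (rule cl_Gamma_eq_units_if_conj_closed)
  fix T S X :: "nat set \<Rightarrow> 'a"
  assume inv: "cl_is_inverse eta n T S" and X: "X \<in> cl_grade n n"
  have "even (n - 1)" using assms by simp
  then have "(\<lambda>B. (-1) ^ (card B * (n - 1)) * T B) = (\<lambda>B. 1 * T B)"
    by simp
  from cl_conj_pseudoscalar_multiple[OF inv X this]
  show "cl_mult eta n (cl_mult eta n T X) S \<in> cl_grade n n"
    using X by simp
qed

lemma cl_Gamma_top_even:
  fixes eta :: "nat \<Rightarrow> 'a::field_char_0"
  assumes "even n" "0 < n" and eta: "\<And>i. eta i \<noteq> 0"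
  shows "cl_Gamma eta n n = cl_units eta n (cl_even n) \<union> cl_units eta n (cl_odd n)"
proof -
  have "odd (n - 1)" using assms by simp
  then have twist: "(\<lambda>B. (-1) ^ (card B * (n - 1)) * T B) = (\<lambda>B. (-1 :: 'a) ^ card B * T B)" for T
    by (metis neg_one_even_power neg_one_odd_power even_mult_iff)
  show ?thesis
  proof
    show "cl_units eta n (cl_even n) \<union> cl_units eta n (cl_odd n) \<subseteq> cl_Gamma eta n n"
    proof
      fix T assume T: "T \<in> cl_units eta n (cl_even n) \<union> cl_units eta n (cl_odd n)"
      have "(\<lambda>B. (-1) ^ card B * T B) = (\<lambda>B. k * T B)" if "k = 1 \<and> T \<in> cl_even n \<or> k = -1 \<and> T \<in> cl_odd n"
        for k :: 'a
      proof
        fix B show "(-1) ^ card B * T B = k * T B"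
          using that by (cases "even (card B)") (auto simp: cl_even_def cl_odd_def)
      qed
      then obtain k :: 'a where tw: "(\<lambda>B. (-1) ^ (card B * (n - 1)) * T B) = (\<lambda>B. k * T B)"
        using T unfolding twist cl_units_def by blast
      have conj: "cl_mult eta n (cl_mult eta n T X) S \<in> cl_grade n n"
        if inv: "cl_is_inverse eta n T S" and X: "X \<in> cl_grade n n" for S X
        using cl_conj_pseudoscalar_multiple[OF inv X tw] cl_scale_in_grade[OF X] by simp
      have "T \<in> cl_carrier n" "\<exists>S. cl_is_inverse eta n T S"
        using T by (auto simp: cl_units_def cl_even_def cl_odd_def)
      with conj show "T \<in> cl_Gamma eta n n"
        by (simp add: cl_Gamma_def cl_units_def)
    qed
  next
    show "cl_Gamma eta n n \<subseteq> cl_units eta n (cl_even n) \<union> cl_units eta n (cl_odd n)"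
    proof
      fix T assume "T \<in> cl_Gamma eta n n"
      then obtain S where T: "T \<in> cl_carrier n" and inv: "cl_is_inverse eta n T S"
        and conj: "\<And>X. X \<in> cl_grade n n \<Longrightarrow> cl_mult eta n (cl_mult eta n T X) S \<in> cl_grade n n"
        by (auto simp: cl_Gamma_def cl_units_def)
      let ?P = "cl_pseudoscalar n :: nat set \<Rightarrow> 'a"
      have "?P \<in> cl_grade n n"
        by (auto simp: cl_grade_def cl_carrier_def cl_pseudoscalar_def)
      then obtain d where d: "cl_mult eta n (cl_mult eta n T ?P) S = (\<lambda>A. d * ?P A)"
        using conj cl_grade_top_eq_pseudoscalar by blast
      have "cl_mult eta n ?P (\<lambda>B. (-1) ^ card B * T B) = cl_mult eta n T ?P"
        by (simp only: cl_mult_pseudoscalar_commute twist)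
      also have "\<dots> = cl_mult eta n (cl_mult eta n T ?P) (cl_mult eta n S T)"
        using inv by (simp add: cl_is_inverse_def cl_mult_one_right cl_mult_in_carrier)
      also have "\<dots> = cl_mult eta n ?P (\<lambda>B. d * T B)"
        by (simp add: cl_mult_assoc d cl_mult_scale_left cl_mult_scale_right)
      finally have "(\<lambda>B. (-1) ^ card B * T B) = (\<lambda>B. d * T B)"
        by (rule cl_mult_pseudoscalar_left_cancel[OF eta])
          (use T in \<open>auto simp: cl_carrier_def\<close>)
      then have parity: "(-1) ^ card B = d" if "T B \<noteq> 0" for B
        using that by (metis mult_cancel_right)
      show "T \<in> cl_units eta n (cl_even n) \<union> cl_units eta n (cl_odd n)"
      proof (cases "d = 1")
        case True
        then have "T A = 0" if "odd (card A)" for A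
          using parity[of A] that by force
        then have "T \<in> cl_even n" using T by (simp add: cl_even_def)
        then show ?thesis using inv by (auto simp: cl_units_def)
      next
        case False
        then have "T A = 0" if "even (card A)" for A
          using parity[of A] that by force
        then have "T \<in> cl_odd n" using T by (simp add: cl_odd_def)
        then show ?thesis using inv by (auto simp: cl_units_def)
      qed
    qed
  qed
qed

lemma cl_Gamma_zero_and_top:
  fixes eta :: "nat \<Rightarrow> 'a::field_char_0"
  assumes "0 < n" and "\<And>i. eta i \<noteq> 0"
  shows "cl_Gamma eta n 0 = cl_units eta n (cl_carrier n) \<and>
         cl_Gamma eta n n =
           (if odd n then cl_units eta n (cl_carrier n)
            else cl_units eta n (cl_even n) \<union> cl_units eta n (cl_odd n))"
  using cl_Gamma_zero[of eta n] cl_Gamma_top_odd[of n eta] cl_Gamma_top_even[of n eta] assms by simp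

theorem mainTheorem1:
  fixes n :: nat
  assumes "n \<ge> 2"
  shows "(\<forall>p q. p + q = n \<longrightarrow>
            cl_Gamma (eta_real p) n 0 = cl_units (eta_real p) n (cl_carrier n) \<and>
            cl_Gamma (eta_real p) n n =
              (if odd n then cl_units (eta_real p) n (cl_carrier n)
               else cl_units (eta_real p) n (cl_even n) \<union> cl_units (eta_real p) n (cl_odd n)))
       \<and> (cl_Gamma eta_complex n 0 = cl_units eta_complex n (cl_carrier n) \<and>
            cl_Gamma eta_complex n n =
              (if odd n then cl_units eta_complex n (cl_carrier n)
               else cl_units eta_complex n (cl_even n) \<union> cl_units eta_complex n (cl_odd n)))"
proof -
  have "0 < n" using assms by simp
  moreover have "eta_real p i \<noteq> 0" "eta_complex i \<noteq> 0" for p i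
    by (simp_all add: eta_real_def eta_complex_def)
  ultimately show ?thesis by (simp add: cl_Gamma_zero_and_top)
qed

end
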